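(* Let $m \geq 0$, $n \geq 1$ be integers and let $c = (c^t; c^b)$ be a sorted deterministically recurrent configuration on $K_{m,n}^0$. Let $k_j := |\{ i \in \{1,\ldots,m\} : c^t_i < j\}|$ for $j \in \{1,\ldots,n\}$, and let $(F_1, F_2) := (F(k), F(c^b))$. Then $\mathrm{Diff}(F_1, F_2) = \Phi(c)$; that is, $\Phi = \mathrm{Diff} \circ \Psi$ on sorted deterministically recurrent configurations, where $\Psi(c) := (F(k), F(c^b))$.
   Context: $K_{m,n}^0$ is the complete bipartite graph with "top" vertices $v^t_0, \ldots, v^t_m$ and "bottom" vertices $v^b_1, \ldots, v^b_n$, with an edge between every top and every bottom vertex; $v^t_0$ is the sink. A configuration is a vector $c = (c^t_1, \ldots, c^t_m; c^b_1, \ldots, c^b_n)$ of non-negative integers; it is sorted if $c^t$, $c^b$ are weakly increasing, stable if $c^t_i < n$ and $c^b_j < m+1$ for all $i,j$. Abelian sandpile model (ASM): an unstable non-sink vertex topples by sending one grain to each neighbour (bottom vertices also to the sink); grains sent to the sink disappear. In the Markov chain on stable configurations which adds a grain to a uniformly random non-sink vertex and stabilises by the ASM, a stable configuration is deterministically recurrent if it is a recurrent state. Ferrers diagrams: for a weakly increasing sequence $s=(s_1,\ldots,s_r)$ of non-negative integers, $F(s)$ is the left-aligned diagram with $s_i$ unit cells in row $i$, rows numbered from bottom to top; we place it with its bottom-left corner at the origin, so row $i$ occupies cells $[x-1,x]\times[i-1,i]$ for $1 \le x \le s_i$. For $F_1 = F(s)$ and $F_2 = F(s')$ with $s, s'$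 of length $n$ and $s_n = s'_n = m$: let $F_1' := F(0, s_1, \ldots, s_{n-1}, s_n + 1)$ (add an empty row at the bottom and one cell to the top row) and $F_2' := F(s'_1 + 1, \ldots, s'_n + 1, m+1)$ (add one cell to each row and a full row of $m+1$ cells at the top). $\mathrm{Diff}(F_1,F_2) := F_2' \setminus F_1'$ is the set of unit cells of $F_2'$ not in $F_1'$. A parallelogram polyomino in the box $[0,m+1]\times[0,n]$ is the set of unit cells lying between two lattice paths $\mathcal{U}$ (upper) and $\mathcal{L}$ (lower) from $(0,0)$ to $(m+1,n)$ with steps $N=(0,1)$, $E=(1,0)$, which meet only at their endpoints. The Dukes–Le Borgne map $\Phi$: for a sorted stable $c$, $\mathcal{U}(c^t)$ is the path from $(0,0)$ to $(m+1,n)$ whose $E$ steps occur at heights $1+c^t_1, \ldots, 1+c^t_m, n$ (in this order), and $\mathcal{L}(c^b)$ is the path from $(0,0)$ to $(m+1,n)$ whose $N$ steps occur at $x$-coordinates $1+c^b_1, \ldots, 1+c^b_n$; $\Phi(c)$ is the set of unit cells between $\mathcal{U}(c^t)$ and $\mathcal{L}(c^b)$. It is known that $\Phi$ is a bijection from sorted deterministically recurrent configurations on $K_{m,n}^0$ to parallelogram polyominoes with bounding box $[0,m+1]\times[0,n]$. *)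

theory Defs
  imports Main
begin

text \<open>Vertices: Top i (i = 0..m, Top 0 is the sink) and Bot j (j = 1..n).
  Other constructor values are not vertices of the graph.\<close>
datatype vert = Top nat | Bot nat

definition nonsink :: "nat \<Rightarrow> nat \<Rightarrow> vert set" where
  "nonsink m n = {Top i | i. 1 \<le> i \<and> i \<le> m} \<union> {Bot j | j. 1 \<le> j \<and> j \<le> n}"

text \<open>Degree of a non-sink vertex: top vertices have n neighbours,
  bottom vertices have m+1 neighbours (including the sink).\<close>
fun deg :: "nat \<Rightarrow> nat \<Rightarrow> vert \<Rightarrow> nat" where
  "deg m n (Top i) = n"
| "deg m n (Bot j) = m + 1"

fun adj :: "vert \<Rightarrow> vert \<Rightarrow> bool" where
  "adj (Top i) (Bot j) = True"
| "adj (Bot j) (Top i) = True"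
| "adj _ _ = False"

definition is_config :: "nat \<Rightarrow> nat \<Rightarrow> (vert \<Rightarrow> nat) \<Rightarrow> bool" where
  "is_config m n c \<longleftrightarrow> (\<forall>v. v \<notin> nonsink m n \<longrightarrow> c v = 0)"

definition stable :: "nat \<Rightarrow> nat \<Rightarrow> (vert \<Rightarrow> nat) \<Rightarrow> bool" where
  "stable m n c \<longleftrightarrow> (\<forall>v\<in>nonsink m n. c v < deg m n v)"

text \<open>Toppling of vertex v: v loses deg v grains, every non-sink neighbour gains one
  (grains sent to the sink disappear).\<close>
definition topple :: "nat \<Rightarrow> nat \<Rightarrow> vert \<Rightarrow> (vert \<Rightarrow> nat) \<Rightarrow> (vert \<Rightarrow> nat)" where
  "topple m n v c = (\<lambda>w. if w = v then c w - deg m n v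
                         else if w \<in> nonsink m n \<and> adj v w then c w + 1 else c w)"

definition topple_step :: "nat \<Rightarrow> nat \<Rightarrow> (vert \<Rightarrow> nat) \<Rightarrow> (vert \<Rightarrow> nat) \<Rightarrow> bool" where
  "topple_step m n c c' \<longleftrightarrow> (\<exists>v\<in>nonsink m n. deg m n v \<le> c v \<and> c' = topple m n v c)"

definition stabilises_to :: "nat \<Rightarrow> nat \<Rightarrow> (vert \<Rightarrow> nat) \<Rightarrow> (vert \<Rightarrow> nat) \<Rightarrow> bool" where
  "stabilises_to m n c c' \<longleftrightarrow> (topple_step m n)\<^sup>*\<^sup>* c c' \<and> stable m n c'"

text \<open>Transitions of the Markov chain with positive probability: add a grain at
  some non-sink vertex and stabilise.\<close>
definition markov_step :: "nat \<Rightarrow> nat \<Rightarrow> (vert \<Rightarrow> nat) \<Rightarrow> (vert \<Rightarrow> nat) \<Rightarrow> bool" where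
  "markov_step m n c c' \<longleftrightarrow>
     (\<exists>v\<in>nonsink m n. stabilises_to m n (c(v := c v + 1)) c')"

text \<open>Recurrent state of the (finite) Markov chain on stable configurations:
  every state reachable from c can reach c back.\<close>
definition det_recurrent :: "nat \<Rightarrow> nat \<Rightarrow> (vert \<Rightarrow> nat) \<Rightarrow> bool" where
  "det_recurrent m n c \<longleftrightarrow> is_config m n c \<and> stable m n c \<and>
     (\<forall>c'. (markov_step m n)\<^sup>*\<^sup>* c c' \<longrightarrow> (markov_step m n)\<^sup>*\<^sup>* c' c)"

definition sorted_config :: "nat \<Rightarrow> nat \<Rightarrow> (vert \<Rightarrow> nat) \<Rightarrow> bool" where
  "sorted_config m n c \<longleftrightarrow>
     (\<forall>i i'. 1 \<le> i \<and> i \<le> i' \<and> i' \<le> m \<longrightarrow> c (Top i) \<le> c (Top i')) \<and>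
     (\<forall>j j'. 1 \<le> j \<and> j \<le> j' \<and> j' \<le> n \<longrightarrow> c (Bot j) \<le> c (Bot j'))"

text \<open>A unit cell [a,a+1] x [b,b+1] is represented by its lower-left corner (a,b).
  For s = (s_1,...,s_r) (list, 0-indexed), row i (b = i-1) holds the cells with a < s_i.\<close>
definition ferrers :: "nat list \<Rightarrow> (nat \<times> nat) set" where
  "ferrers s = {(a, b). b < length s \<and> a < s ! b}"

text \<open>F_1' = F(0, s_1, ..., s_{n-1}, s_n + 1),  F_2' = F(s'_1+1, ..., s'_n+1, m+1),
  Diff = F_2' minus F_1'.\<close>
definition Diff :: "nat \<Rightarrow> nat list \<Rightarrow> nat list \<Rightarrow> (nat \<times> nat) set" where
  "Diff m s s' = ferrers (map Suc s' @ [m + 1]) - ferrers (0 # butlast s @ [last s + 1])"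

definition k_seq :: "nat \<Rightarrow> nat \<Rightarrow> (vert \<Rightarrow> nat) \<Rightarrow> nat list" where
  "k_seq m n c = map (\<lambda>j. card {i \<in> {1..m}. c (Top i) < j}) [1..<n+1]"

definition bot_seq :: "nat \<Rightarrow> (vert \<Rightarrow> nat) \<Rightarrow> nat list" where
  "bot_seq n c = map (\<lambda>j. c (Bot j)) [1..<n+1]"

text \<open>Height of the E step of the upper path U(c^t) in column a (between x = a and
  x = a+1), a = 0..m: the E steps occur at heights 1+c^t_1, ..., 1+c^t_m, n.\<close>
definition upper_height :: "nat \<Rightarrow> nat \<Rightarrow> (vert \<Rightarrow> nat) \<Rightarrow> nat \<Rightarrow> nat" where
  "upper_height m n c a = (if a < m then 1 + c (Top (a + 1)) else n)"

text \<open>Height of the E step of the lower path L(c^b) in column a: the number of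
  N steps at x-coordinates \<le> a, the N steps being at x = 1+c^b_1, ..., 1+c^b_n.\<close>
definition lower_height :: "nat \<Rightarrow> (vert \<Rightarrow> nat) \<Rightarrow> nat \<Rightarrow> nat" where
  "lower_height n c a = card {j \<in> {1..n}. 1 + c (Bot j) \<le> a}"

text \<open>Phi(c): the unit cells lying between U(c^t) and L(c^b) in the box [0,m+1] x [0,n].\<close>
definition Phi :: "nat \<Rightarrow> nat \<Rightarrow> (vert \<Rightarrow> nat) \<Rightarrow> (nat \<times> nat) set" where
  "Phi m n c = {(a, b). a \<le> m \<and> lower_height n c a \<le> b \<and> b < upper_height m n c a}"

end

theory Submission
  imports Defs
begin

text \<open>Row b (counted from 0) of both sets is an interval of columns. In Diff its right end
  is c^b_(b+1) (row b of F_2') and its left end is k_b (row b of F_1', with k_0 = 0).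
  In Phi the right end comes from L(c^b), and since c^t is sorted the cell (a, b) lies
  below U(c^t) iff at most a of the c^t_i are below b, i.e. iff k_b \<le> a. For a sorted
  sequence both counting functions turn into threshold conditions.\<close>

lemma card_downward_closed_le_iff:
  assumes "\<And>i j. 1 \<le> i \<Longrightarrow> i \<le> j \<Longrightarrow> j \<le> m \<Longrightarrow> P j \<Longrightarrow> P i"
  shows "card {i \<in> {1..m}. P i} \<le> a \<longleftrightarrow> (a < m \<longrightarrow> \<not> P (Suc a))"
proof
  assume card_le: "card {i \<in> {1..m}. P i} \<le> a"
  show "a < m \<longrightarrow> \<not> P (Suc a)"
  proof (intro impI notI)
    assume "a < m" "P (Suc a)"
    then have "{1..Suc a} \<subseteq> {i \<in> {1..m}. P i}" using assms by auto
    then have "Suc a \<le> card {i \<in> {1..m}. P i}" using card_mono[of _ "{1..Suc a}"] by fastforce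
    with card_le show False by simp
  qed
next
  assume threshold: "a < m \<longrightarrow> \<not> P (Suc a)"
  have "i \<le> a" if "i \<in> {1..m}" "P i" for i
  proof (rule ccontr)
    assume "\<not> i \<le> a"
    then have "a < m" "P (Suc a)" using that assms[of "Suc a" i] by auto
    with threshold show False by simp
  qed
  then have "{i \<in> {1..m}. P i} \<subseteq> {1..a}" by auto
  then show "card {i \<in> {1..m}. P i} \<le> a" using card_mono[of "{1..a}"] by fastforce
qed

lemma nth_Diff_lower_row:
  assumes "length s = n" "b \<le> n"
  shows "(0 # butlast s @ [last s + 1]) ! b =
    (if b = 0 then 0 else if b < n then s ! (b - 1) else last s + 1)"
proof (cases b)
  case (Suc b')
  have "length (butlast s) = n - 1" using assms(1) by simp
  then show ?thesis
    using Suc assms by (cases "b' < n - 1") (auto simp: nth_append nth_butlast)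
qed simp

lemma mem_Diff_iff:
  assumes "length s = n" "length s' = n" "1 \<le> n" "last s = m"
  shows "(a, b) \<in> Diff m s s' \<longleftrightarrow> b < n \<and> a \<le> s' ! b \<and> (b = 0 \<or> s ! (b - 1) \<le> a)"
proof (cases "b \<le> n")
  case True
  have "(map Suc s' @ [m + 1]) ! b = (if b < n then Suc (s' ! b) else m + 1)"
    using True assms(2) by (auto simp: nth_append)
  then show ?thesis
    using True assms nth_Diff_lower_row[OF assms(1) True]
    unfolding Diff_def ferrers_def by auto
next
  case False
  then show ?thesis using assms(2) unfolding Diff_def ferrers_def by auto
qed

lemma stable_Top_less:
  assumes "stable m n c" "1 \<le> i" "i \<le> m"
  shows "c (Top i) < n"
proof -
  have "Top i \<in> nonsink m n" using assms(2,3) unfolding nonsink_def by blast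
  with assms(1) show ?thesis unfolding stable_def by fastforce
qed

lemma stable_Bot_le:
  assumes "stable m n c" "1 \<le> j" "j \<le> n"
  shows "c (Bot j) \<le> m"
proof -
  have "Bot j \<in> nonsink m n" using assms(2,3) unfolding nonsink_def by blast
  with assms(1) show ?thesis unfolding stable_def by fastforce
qed

lemma card_Top_less_le_iff:
  assumes "sorted_config m n c"
  shows "card {i \<in> {1..m}. c (Top i) < b} \<le> a \<longleftrightarrow> (a < m \<longrightarrow> b \<le> c (Top (Suc a)))"
proof -
  have "c (Top i) < b" if "1 \<le> i" "i \<le> j" "j \<le> m" "c (Top j) < b" for i j
    using assms that unfolding sorted_config_def by (meson le_less_trans)
  then show ?thesis by (subst card_downward_closed_le_iff) (auto simp: not_less)
qed

lemma lower_height_le_iff: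
  assumes "sorted_config m n c" "b < n"
  shows "lower_height n c a \<le> b \<longleftrightarrow> a \<le> c (Bot (Suc b))"
proof -
  have "1 + c (Bot i) \<le> a" if "1 \<le> i" "i \<le> j" "j \<le> n" "1 + c (Bot j) \<le> a" for i j
    using assms(1) that unfolding sorted_config_def by (meson add_left_mono order_trans)
  then show ?thesis
    unfolding lower_height_def using assms(2)
    by (subst card_downward_closed_le_iff) auto
qed

lemma mem_Phi_iff:
  assumes "sorted_config m n c" "stable m n c"
  shows "(a, b) \<in> Phi m n c \<longleftrightarrow>
    b < n \<and> a \<le> c (Bot (Suc b)) \<and> (a < m \<longrightarrow> b \<le> c (Top (Suc a)))"
proof -
  have "upper_height m n c a \<le> n"
    using stable_Top_less[OF assms(2), of "Suc a"] unfolding upper_height_def by auto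
  moreover have "b < n \<Longrightarrow> a \<le> c (Bot (Suc b)) \<Longrightarrow> a \<le> m"
    using stable_Bot_le[OF assms(2), of "Suc b"] by simp
  ultimately show ?thesis
    using lower_height_le_iff[OF assms(1)] unfolding Phi_def upper_height_def by auto
qed

lemma length_k_seq: "length (k_seq m n c) = n"
  by (simp add: k_seq_def)

lemma nth_k_seq: "j < n \<Longrightarrow> k_seq m n c ! j = card {i \<in> {1..m}. c (Top i) < Suc j}"
  by (simp add: k_seq_def del: upt_Suc)

lemma last_k_seq:
  assumes "stable m n c" "1 \<le> n"
  shows "last (k_seq m n c) = m"
proof -
  have "k_seq m n c \<noteq> []" using assms(2) length_k_seq[of m n c] by auto
  then have "last (k_seq m n c) = k_seq m n c ! (n - 1)"
    by (simp add: last_conv_nth length_k_seq)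
  also have "\<dots> = card {i \<in> {1..m}. c (Top i) < n}"
    using assms(2) nth_k_seq[of "n - 1" n m c] by simp
  also have "{i \<in> {1..m}. c (Top i) < n} = {1..m}"
    using stable_Top_less[OF assms(1)] by auto
  finally show ?thesis by simp
qed

lemma length_bot_seq: "length (bot_seq n c) = n"
  by (simp add: bot_seq_def)

lemma nth_bot_seq: "j < n \<Longrightarrow> bot_seq n c ! j = c (Bot (Suc j))"
  by (simp add: bot_seq_def del: upt_Suc)

lemma mem_Diff_k_seq_bot_seq_iff:
  assumes "stable m n c" "1 \<le> n"
  shows "(a, b) \<in> Diff m (k_seq m n c) (bot_seq n c) \<longleftrightarrow>
    b < n \<and> a \<le> c (Bot (Suc b)) \<and> (b = 0 \<or> card {i \<in> {1..m}. c (Top i) < b} \<le> a)"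
proof -
  have k_entry: "k_seq m n c ! (b - 1) = card {i \<in> {1..m}. c (Top i) < b}"
    if "0 < b" "b < n"
    using that nth_k_seq[of "b - 1" n m c] by simp
  have "(a, b) \<in> Diff m (k_seq m n c) (bot_seq n c) \<longleftrightarrow>
      b < n \<and> a \<le> bot_seq n c ! b \<and> (b = 0 \<or> k_seq m n c ! (b - 1) \<le> a)"
    using assms by (intro mem_Diff_iff) (simp_all add: length_k_seq length_bot_seq last_k_seq)
  then show ?thesis
    using nth_bot_seq[of b n c] k_entry by (cases "b = 0") auto
qed

theorem theorem4p9:
  fixes m n :: nat and c :: "vert \<Rightarrow> nat"
  assumes "1 \<le> n"
    and "sorted_config m n c"
    and "det_recurrent m n c"
  shows "Diff m (k_seq m n c) (bot_seq n c) = Phi m n c"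
proof -
  have stable: "stable m n c" using assms(3) unfolding det_recurrent_def by simp
  have "(a, b) \<in> Diff m (k_seq m n c) (bot_seq n c) \<longleftrightarrow> (a, b) \<in> Phi m n c" for a b
    unfolding mem_Diff_k_seq_bot_seq_iff[OF stable assms(1)] mem_Phi_iff[OF assms(2) stable]
    using card_Top_less_le_iff[OF assms(2), of b a] by auto
  then show ?thesis by auto
qed

end
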